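(* In the setting below, if $\varphi,\psi\in X_N$ satisfy $\mathrm{dist}_\infty(\mathrm{supp}\,\varphi,\mathrm{supp}\,\psi)>l-1$, then $$\langle\mathcal{T}\varphi,\psi\rangle=\langle\mathcal{T}'\varphi,\psi\rangle=\langle\mathcal{R}\varphi,\psi\rangle=\langle\mathcal{R}'\varphi,\psi\rangle=0.$$
   Context: Standing: $d\ge2$, $m\ge1$, $L\ge3$ odd, $N\ge1$. $\mathbb{T}_N=(\mathbb{Z}/L^N\mathbb{Z})^d$; $\rho_\infty(x,y)=\min\{|x-y+z|_\infty:z\in(L^N\mathbb{Z})^d\}$; $\mathrm{dist}_\infty(M_1,M_2)=\min\{\rho_\infty(x,y):x\in M_1,y\in M_2\}$. $X_N$: maps $\mathbb{T}_N\to\mathbb{R}^m$ with zero sum, $\langle\varphi,\psi\rangle=\sum_x\langle\varphi(x),\psi(x)\rangle$. $(\nabla_j\varphi)(x)=\varphi(x+e_j)-\varphi(x)$. $A:\mathbb{R}^{m\times d}\to\mathbb{R}^{m\times d}$ linear, symmetric, $(AF,F)\ge c_0|F|^2$, $c_0>0$; $(\varphi,\psi)_+=\sum_x(A\nabla\varphi(x),\nabla\psi(x))$. Let $l\ge3$ be an integer with $l-1<L^N$, $Q=\{1,\dots,l-1\}^d$. $\Pi_x$ is the $(\cdot,\cdot)_+$-orthogonal projection of $X_N$ onto $\{\varphi\in X_N:\varphi=0\text{ outside }Q+x\}$; $\mathcal{T}=l^{-d}\sum_x\Pi_x$, $\mathcal{R}=\mathrm{id}-\mathcal{T}$; $\mathcal{T}',\mathcal{R}'$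 are the adjoints with respect to $\langle\cdot,\cdot\rangle$. *)

theory Defs
  imports "HOL-Analysis.Analysis" "HOL-Library.Extended_Real"
begin

text \<open>The torus (Z / M Z)^d with M = L^N is modelled by M-periodic functions on Z^d;
  points of Z^d are int vectors indexed by the finite type 'd; R^m is real^'m;
  m x d matrices are real^'d^'m with the Frobenius inner product.\<close>

definition ej :: "'d::finite \<Rightarrow> int^'d" where
  "ej j = (\<chi> i. if i = j then 1 else 0)"

definition periodic_tor :: "nat \<Rightarrow> (int^'d::finite \<Rightarrow> 'a) \<Rightarrow> bool" where
  "periodic_tor M f \<longleftrightarrow> (\<forall>x j. f (x + of_nat M * ej j) = f x)"

definition tbox :: "nat \<Rightarrow> (int^'d::finite) set" where
  "tbox M = {x. \<forall>j. 0 \<le> x$j \<and> x$j < int M}"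

definition XN :: "nat \<Rightarrow> (int^'d::finite \<Rightarrow> real^'m::finite) set" where
  "XN M = {\<phi>. periodic_tor M \<phi> \<and> (\<Sum>x\<in>tbox M. \<phi> x) = 0}"

definition ip :: "nat \<Rightarrow> (int^'d::finite \<Rightarrow> real^'m::finite) \<Rightarrow> (int^'d \<Rightarrow> real^'m) \<Rightarrow> real" where
  "ip M \<phi> \<psi> = (\<Sum>x\<in>tbox M. \<phi> x \<bullet> \<psi> x)"

definition grad :: "(int^'d::finite \<Rightarrow> real^'m::finite) \<Rightarrow> int^'d \<Rightarrow> real^'d^'m" where
  "grad \<phi> x = (\<chi> i. \<chi> j. (\<phi> (x + ej j) - \<phi> x) $ i)"

definition ipA :: "(real^'d^'m \<Rightarrow> real^'d^'m) \<Rightarrow> nat \<Rightarrow>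
    (int^'d::finite \<Rightarrow> real^'m::finite) \<Rightarrow> (int^'d \<Rightarrow> real^'m) \<Rightarrow> real" where
  "ipA A M \<phi> \<psi> = (\<Sum>x\<in>tbox M. A (grad \<phi> x) \<bullet> grad \<psi> x)"

definition cong_tor :: "nat \<Rightarrow> int^'d::finite \<Rightarrow> int^'d \<Rightarrow> bool" where
  "cong_tor M x y \<longleftrightarrow> (\<forall>j. x$j mod int M = y$j mod int M)"

definition cubeQ :: "nat \<Rightarrow> (int^'d::finite) set" where
  "cubeQ l = {q. \<forall>j. 1 \<le> q$j \<and> q$j \<le> int l - 1}"

definition Vsub :: "nat \<Rightarrow> nat \<Rightarrow> int^'d::finite \<Rightarrow> (int^'d \<Rightarrow> real^'m::finite) set" where
  "Vsub M l x = {\<phi> \<in> XN M. \<forall>y. (\<not> (\<exists>q\<in>cubeQ l. cong_tor M y (q + x))) \<longrightarrow> \<phi> y = 0}"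

definition Proj :: "(real^'d^'m \<Rightarrow> real^'d^'m) \<Rightarrow> nat \<Rightarrow> nat \<Rightarrow> int^'d::finite \<Rightarrow>
    (int^'d \<Rightarrow> real^'m::finite) \<Rightarrow> (int^'d \<Rightarrow> real^'m)" where
  "Proj A M l x \<phi> = (THE \<psi>. \<psi> \<in> Vsub M l x \<and>
      (\<forall>\<eta>\<in>Vsub M l x. ipA A M (\<lambda>y. \<phi> y - \<psi> y) \<eta> = 0))"

definition Top :: "(real^'d^'m \<Rightarrow> real^'d^'m) \<Rightarrow> nat \<Rightarrow> nat \<Rightarrow>
    (int^'d::finite \<Rightarrow> real^'m::finite) \<Rightarrow> (int^'d \<Rightarrow> real^'m)" where
  "Top A M l \<phi> = (\<lambda>y. (1 / real l ^ CARD('d)) *\<^sub>R (\<Sum>x\<in>tbox M. Proj A M l x \<phi> y))"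

definition Rop :: "(real^'d^'m \<Rightarrow> real^'d^'m) \<Rightarrow> nat \<Rightarrow> nat \<Rightarrow>
    (int^'d::finite \<Rightarrow> real^'m::finite) \<Rightarrow> (int^'d \<Rightarrow> real^'m)" where
  "Rop A M l \<phi> = (\<lambda>y. \<phi> y - Top A M l \<phi> y)"

definition adj :: "nat \<Rightarrow> ((int^'d::finite \<Rightarrow> real^'m::finite) \<Rightarrow> (int^'d \<Rightarrow> real^'m)) \<Rightarrow>
    (int^'d \<Rightarrow> real^'m) \<Rightarrow> (int^'d \<Rightarrow> real^'m)" where
  "adj M Op \<phi> = (THE \<eta>. \<eta> \<in> XN M \<and> (\<forall>\<psi>\<in>XN M. ip M \<eta> \<psi> = ip M \<phi> (Op \<psi>)))"

definition supnorm :: "int^'d::finite \<Rightarrow> int" where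
  "supnorm v = Max (range (\<lambda>j. \<bar>v$j\<bar>))"

definition rho :: "nat \<Rightarrow> int^'d::finite \<Rightarrow> int^'d \<Rightarrow> int" where
  "rho M x y = Inf {supnorm (x - y + of_nat M * z) | z. True}"

definition suppT :: "nat \<Rightarrow> (int^'d::finite \<Rightarrow> real^'m::finite) \<Rightarrow> (int^'d) set" where
  "suppT M \<phi> = {x \<in> tbox M. \<phi> x \<noteq> 0}"

text \<open>dist_inf, with the usual convention min of the empty set = infinity.\<close>
definition dist_inf :: "nat \<Rightarrow> (int^'d::finite) set \<Rightarrow> (int^'d) set \<Rightarrow> ereal" where
  "dist_inf M S1 S2 = Inf {ereal (real_of_int (rho M x y)) | x y. x \<in> S1 \<and> y \<in> S2}"

end

theory Submission
  imports Defs "HOL-Library.Function_Algebras"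
begin

text \<open>Each projection \<open>\<Pi>\<^sub>x\<close> only sees the cube \<open>Q + x\<close>: its range \<open>V\<^sub>x\<close> consists of
  functions vanishing off \<open>Q + x\<close>, and since \<open>(\<cdot>,\<cdot>)\<^sub>+\<close> only involves nearest-neighbour
  differences, \<open>(\<phi>, \<eta>)\<^sub>+ = 0\<close> for all \<open>\<eta> \<in> V\<^sub>x\<close> as soon as \<open>\<phi>\<close> vanishes on the closed
  cube \<open>{0..l}\<^sup>d + x\<close>, and then \<open>\<Pi>\<^sub>x \<phi> = 0\<close>. If the supports of \<open>\<phi>\<close> and \<open>\<psi>\<close> are more
  than \<open>l - 1\<close> apart, then for every \<open>x\<close> either \<open>\<psi>\<close> vanishes on \<open>Q + x\<close>, so that
  \<open>\<langle>\<Pi>\<^sub>x \<phi>, \<psi>\<rangle> = 0\<close> pointwise, or \<open>\<phi>\<close> vanishes on \<open>{0..l}\<^sup>d + x\<close>, so that \<open>\<Pi>\<^sub>x \<phi> = 0\<close>.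
  Summing over \<open>x\<close> gives \<open>\<langle>T \<phi>, \<psi>\<rangle> = 0\<close>; then \<open>\<langle>R \<phi>, \<psi>\<rangle> = \<langle>\<phi>, \<psi>\<rangle> - \<langle>T \<phi>, \<psi>\<rangle> = 0\<close>
  as the supports are disjoint, and the statements for the adjoints follow from
  \<open>\<langle>T' \<phi>, \<psi>\<rangle> = \<langle>\<phi>, T \<psi>\<rangle>\<close> because the hypothesis is symmetric in \<open>\<phi>\<close> and \<open>\<psi>\<close>.

  Projections and adjoints are definite descriptions, so their existence must be shown: both
  are instances of a Riesz representation for a symmetric bilinear form that is definite on a
  finitely generated space of functions, \<open>X\<^sub>N\<close> and \<open>V\<^sub>x\<close> being spanned by dipoles
  \<open>(\<delta>\<^sub>p - \<delta>\<^sub>b) e\<^sub>i\<close>. The form \<open>(\<cdot>,\<cdot>)\<^sub>+\<close> is definite on \<open>V\<^sub>x\<close> because a function with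
  vanishing gradient is constant along lattice lines, and every such line leaves \<open>Q + x\<close> on
  the torus since \<open>l \<le> L\<^sup>N\<close>.\<close>

section \<open>The discrete torus\<close>

definition tor_rep :: "nat \<Rightarrow> int^'d::finite \<Rightarrow> int^'d" where
  "tor_rep M w = (\<chi> j. w$j mod int M)"

lemma cong_tor_iff_dvd: "cong_tor M u w \<longleftrightarrow> (\<forall>j. int M dvd u$j - w$j)"
  by (simp add: cong_tor_def mod_eq_dvd_iff)

lemma cong_tor_refl [simp]: "cong_tor M u u"
  by (simp add: cong_tor_def)

lemma cong_tor_sym: "cong_tor M u w \<Longrightarrow> cong_tor M w u"
  by (simp add: cong_tor_def)

lemma cong_tor_trans: "cong_tor M u v \<Longrightarrow> cong_tor M v w \<Longrightarrow> cong_tor M u w"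
  by (simp add: cong_tor_def)

lemma cong_tor_add_right: "cong_tor M u v \<Longrightarrow> cong_tor M (u + w) (v + w)"
  by (simp add: cong_tor_iff_dvd)

lemma cong_tor_diff: "cong_tor M a c \<Longrightarrow> cong_tor M b d \<Longrightarrow> cong_tor M (a - b) (c - d)"
proof -
  assume "cong_tor M a c" "cong_tor M b d"
  then have "int M dvd (a$j - c$j) - (b$j - d$j)" for j
    by (simp add: cong_tor_iff_dvd dvd_diff)
  then show ?thesis by (simp add: cong_tor_iff_dvd algebra_simps)
qed

lemma cong_tor_iff_tor_rep_eq: "cong_tor M u w \<longleftrightarrow> tor_rep M u = tor_rep M w"
  by (simp add: cong_tor_def tor_rep_def vec_eq_iff)

lemma tor_rep_in_tbox: "M > 0 \<Longrightarrow> tor_rep M w \<in> tbox M"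
  by (simp add: tbox_def tor_rep_def)

lemma tor_rep_tbox: "w \<in> tbox M \<Longrightarrow> tor_rep M w = w"
  by (simp add: tbox_def tor_rep_def vec_eq_iff)

lemma cong_tor_tor_rep: "cong_tor M w (tor_rep M w)"
  by (simp add: cong_tor_def tor_rep_def)

lemma cong_tor_imp_shift:
  assumes "cong_tor M u w"
  obtains z where "w = u + of_nat M * z"
proof
  have "int M dvd w$j - u$j" for j
    using cong_tor_sym[OF assms] by (simp add: cong_tor_iff_dvd)
  then show "w = u + of_nat M * (\<chi> j. (w$j - u$j) div int M)"
    by (simp add: vec_eq_iff of_nat_index dvd_mult_div_cancel)
qed

lemma periodic_tor_shift_multiple:
  assumes "periodic_tor M \<phi>"
  shows "\<phi> (x + (k * int M) *s ej j) = \<phi> x"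
proof -
  have period: "\<phi> (y + int M *s ej j) = \<phi> y" for y
  proof -
    have "of_nat M * ej j = int M *s ej j"
      by (simp add: vec_eq_iff of_nat_index)
    moreover have "\<phi> (y + of_nat M * ej j) = \<phi> y"
      using assms unfolding periodic_tor_def by blast
    ultimately show ?thesis by simp
  qed
  show ?thesis
  proof (induction k rule: int_induct[where k = 0])
    case (step1 i)
    have "\<phi> (x + ((i + 1) * int M) *s ej j) = \<phi> ((x + (i * int M) *s ej j) + int M *s ej j)"
      by (rule arg_cong[where f = \<phi>]) (simp add: vec_eq_iff algebra_simps)
    also have "\<dots> = \<phi> x" using period step1.IH by simp
    finally show ?case .
  next
    case (step2 i)
    have "\<phi> (x + (i * int M) *s ej j) = \<phi> ((x + ((i - 1) * int M) *s ej j) + int M *s ej j)"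
      by (rule arg_cong[where f = \<phi>]) (simp add: vec_eq_iff algebra_simps)
    with period step2.IH show ?case by simp
  qed simp
qed

lemma periodic_tor_shift:
  assumes "periodic_tor M \<phi>"
  shows "\<phi> (x + of_nat M * z) = \<phi> x"
proof -
  have partial: "\<phi> (y + (\<Sum>j\<in>S. (z$j * int M) *s ej j)) = \<phi> y" if "finite S" for y S
    using that
  proof (induction S arbitrary: y)
    case (insert j S)
    have "\<phi> (y + (\<Sum>j\<in>insert j S. (z$j * int M) *s ej j))
        = \<phi> ((y + (z$j * int M) *s ej j) + (\<Sum>j\<in>S. (z$j * int M) *s ej j))"
      using insert.hyps by (simp add: algebra_simps)
    also have "\<dots> = \<phi> y"
      using insert.IH periodic_tor_shift_multiple[OF assms] by simp
    finally show ?case .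
  qed simp
  have "of_nat M * z = (\<Sum>j\<in>UNIV. (z$j * int M) *s ej j)"
  proof (subst vec_eq_iff, rule allI)
    fix i
    have "(\<Sum>j\<in>UNIV. ((z$j * int M) *s ej j) $ i) = z$i * int M"
      by (simp add: ej_def if_distrib[where f = "\<lambda>t. _ * t"] cong: if_cong)
    then show "(of_nat M * z)$i = (\<Sum>j\<in>UNIV. (z$j * int M) *s ej j)$i"
      by (simp add: sum_component of_nat_index mult.commute)
  qed
  then show ?thesis using partial[of UNIV x] by simp
qed

lemma periodic_tor_cong:
  assumes "periodic_tor M \<phi>" "cong_tor M u w"
  shows "\<phi> u = \<phi> w"
proof -
  obtain z where "w = u + of_nat M * z" using assms(2) by (rule cong_tor_imp_shift)
  then show ?thesis using periodic_tor_shift[OF assms(1)] by simp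
qed

lemma periodic_tor_tor_rep: "periodic_tor M \<phi> \<Longrightarrow> \<phi> (tor_rep M w) = \<phi> w"
  by (rule periodic_tor_cong[OF _ cong_tor_sym[OF cong_tor_tor_rep]])

lemma eq_if_int_dvd_diff_small:
  fixes a b :: int
  assumes "int M dvd a - b" "\<bar>a - b\<bar> < int M"
  shows "a = b"
  using dvd_imp_le_int[of "a - b" "int M"] assms by fastforce

definition int_box :: "int \<Rightarrow> int \<Rightarrow> (int^'d::finite) set" where
  "int_box a b = {q. \<forall>j. a \<le> q$j \<and> q$j \<le> b}"

lemma mem_int_box [simp]: "q \<in> int_box a b \<longleftrightarrow> (\<forall>j. a \<le> q$j \<and> q$j \<le> b)"
  by (simp add: int_box_def)

lemma int_box_component: "q \<in> int_box a b \<Longrightarrow> a \<le> q$j \<and> q$j \<le> b"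
  by simp

lemma finite_int_box: "finite (int_box a b :: (int^'d::finite) set)"
proof (rule finite_subset)
  show "(int_box a b :: (int^'d) set) \<subseteq> vec_lambda ` Pi\<^sub>E UNIV (\<lambda>_. {a..b})"
  proof
    fix q :: "int^'d" assume "q \<in> int_box a b"
    then have "vec_nth q \<in> Pi\<^sub>E UNIV (\<lambda>_. {a..b})" by (simp add: PiE_UNIV_domain)
    then show "q \<in> vec_lambda ` Pi\<^sub>E UNIV (\<lambda>_. {a..b})" by (metis image_eqI vec_nth_inverse)
  qed
qed (intro finite_imageI finite_PiE; simp)

lemma finite_tbox: "finite (tbox M)"
  by (rule finite_subset[OF _ finite_int_box[of 0 "int M"]]) (auto simp: tbox_def less_imp_le)

lemma cubeQ_eq_int_box: "cubeQ l = int_box 1 (int l - 1)"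
  by (simp add: cubeQ_def int_box_def)

lemma finite_cubeQ: "finite (cubeQ l)"
  by (simp add: cubeQ_eq_int_box finite_int_box)

lemma cubeQ_bounds: "q \<in> cubeQ l \<Longrightarrow> 1 \<le> q$j \<and> q$j \<le> int l - 1"
  by (simp add: cubeQ_def)

lemma finite_if_inj_on_tor_rep:
  assumes "M > 0" "inj_on (tor_rep M) P"
  shows "finite P"
proof (rule finite_imageD[OF _ assms(2)])
  show "finite (tor_rep M ` P)"
    by (rule finite_subset[OF _ finite_tbox]) (use tor_rep_in_tbox[OF assms(1)] in blast)
qed

lemma sum_tbox_eq_sum_reps:
  fixes \<eta> :: "int^'d::finite \<Rightarrow> 'a::comm_monoid_add"
  assumes "M > 0" "inj_on (tor_rep M) P" "periodic_tor M \<eta>"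
    and vanish: "\<And>w. \<forall>p\<in>P. \<not> cong_tor M w p \<Longrightarrow> \<eta> w = 0"
  shows "(\<Sum>w\<in>tbox M. \<eta> w) = (\<Sum>p\<in>P. \<eta> p)"
proof -
  have "(\<Sum>w\<in>tbox M. \<eta> w) = (\<Sum>w\<in>tor_rep M ` P. \<eta> w)"
  proof (rule sum.mono_neutral_right[OF finite_tbox])
    show "tor_rep M ` P \<subseteq> tbox M" using tor_rep_in_tbox[OF assms(1)] by blast
    show "\<forall>w\<in>tbox M - tor_rep M ` P. \<eta> w = 0"
    proof
      fix w assume w: "w \<in> tbox M - tor_rep M ` P"
      have "\<not> cong_tor M w p" if "p \<in> P" for p
        using w that tor_rep_tbox[of w M] by (auto simp: cong_tor_iff_tor_rep_eq)
      then show "\<eta> w = 0" by (simp add: vanish)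
    qed
  qed
  also have "\<dots> = (\<Sum>p\<in>P. \<eta> (tor_rep M p))"
    by (simp add: sum.reindex[OF assms(2)])
  also have "\<dots> = (\<Sum>p\<in>P. \<eta> p)"
    by (simp add: periodic_tor_tor_rep[OF assms(3)])
  finally show ?thesis .
qed

definition tor_delta :: "nat \<Rightarrow> int^'d::finite \<Rightarrow> int^'d \<Rightarrow> real" where
  "tor_delta M p w = (if cong_tor M w p then 1 else 0)"

lemma cong_tor_add_period: "cong_tor M (w + of_nat M * ej j) w"
  by (simp add: cong_tor_iff_dvd of_nat_index ej_def)

lemma periodic_tor_delta: "periodic_tor M (tor_delta M p)"
  unfolding periodic_tor_def tor_delta_def
  using cong_tor_add_period cong_tor_sym cong_tor_trans by meson

lemma sum_tor_delta_reps:
  fixes \<eta> :: "int^'d::finite \<Rightarrow> 'a::real_vector"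
  assumes "M > 0" "inj_on (tor_rep M) P" "periodic_tor M \<eta>"
    and vanish: "\<And>w. \<forall>p\<in>P. \<not> cong_tor M w p \<Longrightarrow> \<eta> w = 0"
  shows "(\<Sum>p\<in>P. tor_delta M p w *\<^sub>R \<eta> p) = \<eta> w"
proof (cases "\<exists>p\<in>P. cong_tor M w p")
  case True
  then obtain p where p: "p \<in> P" "cong_tor M w p" by blast
  have "tor_delta M p' w = (if p' = p then 1 else 0)" if "p' \<in> P" for p'
    using p that assms(2) by (auto simp: tor_delta_def cong_tor_iff_tor_rep_eq dest: inj_onD)
  then have "(\<Sum>p'\<in>P. tor_delta M p' w *\<^sub>R \<eta> p') = (\<Sum>p'\<in>P. if p' = p then \<eta> p else 0)"
    by (intro sum.cong) auto
  also have "\<dots> = \<eta> w"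
    using p finite_if_inj_on_tor_rep[OF assms(1,2)] periodic_tor_cong[OF assms(3) p(2)] by simp
  finally show ?thesis .
next
  case False
  then show ?thesis by (simp add: vanish tor_delta_def)
qed

lemma sum_tbox_tor_delta: "M > 0 \<Longrightarrow> (\<Sum>w\<in>tbox M. tor_delta M p w) = 1"
  using sum_tbox_eq_sum_reps[of M "{p}" "tor_delta M p"]
  by (simp add: periodic_tor_delta tor_delta_def)

section \<open>Representation of linear functionals\<close>

instantiation "fun" :: (type, real_vector) real_vector
begin

definition scaleR_fun :: "real \<Rightarrow> ('a \<Rightarrow> 'b) \<Rightarrow> 'a \<Rightarrow> 'b" where
  "scaleR_fun r f = (\<lambda>x. r *\<^sub>R f x)"

instance
  by standard (simp_all add: scaleR_fun_def fun_eq_iff scaleR_add_right scaleR_add_left)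

end

lemma scaleR_fun_apply [simp]: "(r *\<^sub>R f) x = r *\<^sub>R f x"
  by (simp add: scaleR_fun_def)

lemma sum_fun_apply [simp]: "(\<Sum>k\<in>K. f k) x = (\<Sum>k\<in>K. f k x)"
  by (induction K rule: infinite_finite_induct) auto

lemma linear_right_if_symmetric:
  fixes B :: "'a::real_vector \<Rightarrow> 'a \<Rightarrow> real"
  assumes "\<And>w. linear (\<lambda>v. B v w)" "\<And>v w. B v w = B w v"
  shows "linear (B v)"
proof -
  have "B v = (\<lambda>w. B w v)" by (rule ext) (rule assms(2))
  then show ?thesis using assms(1)[of v] by simp
qed

lemma bilinear_representation_insert:
  fixes B :: "'a::real_vector \<Rightarrow> 'a \<Rightarrow> real"
  assumes lin: "\<And>w. linear (\<lambda>v. B v w)" and sym: "\<And>v w. B v w = B w v"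
    and definite: "\<And>v. v \<in> span (insert a G) \<Longrightarrow> B v v = 0 \<Longrightarrow> v = 0"
    and represent_G: "\<And>g. linear g \<Longrightarrow> \<exists>v\<in>span G. \<forall>w\<in>span G. B v w = g w"
    and f: "linear f"
  shows "\<exists>v\<in>span (insert a G). \<forall>w\<in>span (insert a G). B v w = f w"
proof -
  have lin_right: "linear (B v)" for v
    using lin sym by (rule linear_right_if_symmetric)
  obtain v where v: "v \<in> span G" "\<forall>w\<in>span G. B v w = f w"
    using represent_G[OF f] by blast
  obtain u where u: "u \<in> span G" "\<forall>w\<in>span G. B u w = B a w"
    using represent_G[OF lin_right] by blast
  \<comment> \<open>Gram--Schmidt step: \<open>a'\<close> is \<open>B\<close>-orthogonal to \<open>span G\<close>.\<close>
  define a' where "a' = a - u"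
  have a'_span: "a' \<in> span (insert a G)"
    unfolding a'_def by (meson insertI1 span_base span_diff span_mono subset_insertI subsetD u(1))
  have a'_orth: "B a' w = 0" if "w \<in> span G" for w
    using u(2) that by (simp add: a'_def linear_diff[OF lin])
  show ?thesis
  proof (cases "B a' a' = 0")
    case True
    then have "a \<in> span G" using definite[OF a'_span] u(1) by (simp add: a'_def)
    then show ?thesis using v by (auto simp: span_redundant)
  next
    case False
    define k where "k = (f a' - B v a') / B a' a'"
    show ?thesis
    proof (intro bexI ballI)
      show "v + k *\<^sub>R a' \<in> span (insert a G)"
        using v(1) a'_span by (meson span_add span_mono span_scale subset_insertI subsetD)
      fix w assume "w \<in> span (insert a G)"
      then obtain t where "w - t *\<^sub>R a \<in> span G" by (auto simp: span_breakdown_eq)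
      then have "(w - t *\<^sub>R a) + t *\<^sub>R u \<in> span G" by (simp add: span_add span_scale u(1))
      moreover have "(w - t *\<^sub>R a) + t *\<^sub>R u = w - t *\<^sub>R a'"
        by (simp add: a'_def algebra_simps)
      ultimately obtain w' where w': "w' \<in> span G" "w = w' + t *\<^sub>R a'"
        by (metis diff_add_cancel)
      have "B (v + k *\<^sub>R a') w = B v w' + t * B v a' + k * t * B a' a'"
        using a'_orth[OF w'(1)]
        by (simp add: w'(2) linear_add[OF lin] linear_scale[OF lin]
            linear_add[OF lin_right] linear_scale[OF lin_right] algebra_simps)
      also have "\<dots> = f w' + t * f a'"
        using v(2) w'(1) False by (simp add: k_def field_simps)
      also have "\<dots> = f w"
        by (simp add: w'(2) linear_add[OF f] linear_scale[OF f])
      finally show "B (v + k *\<^sub>R a') w = f w" .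
    qed
  qed
qed

lemma bilinear_representation_exists:
  fixes B :: "'a::real_vector \<Rightarrow> 'a \<Rightarrow> real"
  assumes "finite G"
    and lin: "\<And>w. linear (\<lambda>v. B v w)" and sym: "\<And>v w. B v w = B w v"
    and definite: "\<And>v. v \<in> span G \<Longrightarrow> B v v = 0 \<Longrightarrow> v = 0"
    and "linear f"
  shows "\<exists>v\<in>span G. \<forall>w\<in>span G. B v w = f w"
  using assms(1,4,5)
proof (induction G arbitrary: f rule: finite_induct)
  case empty
  then show ?case by (simp add: linear_0 linear_0[OF lin])
next
  case (insert a G)
  have "\<And>v. v \<in> span G \<Longrightarrow> B v v = 0 \<Longrightarrow> v = 0"
    using insert.prems(1) span_mono[of G "insert a G"] by blast
  with insert show ?case
    by (intro bilinear_representation_insert[OF lin sym]) auto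
qed

lemma bilinear_representation_unique:
  fixes B :: "'a::real_vector \<Rightarrow> 'a \<Rightarrow> real"
  assumes lin: "\<And>w. linear (\<lambda>v. B v w)"
    and definite: "\<And>v. v \<in> S \<Longrightarrow> B v v = 0 \<Longrightarrow> v = 0" and "subspace S"
    and "v1 \<in> S" "\<forall>w\<in>S. B v1 w = f w" "v2 \<in> S" "\<forall>w\<in>S. B v2 w = f w"
  shows "v1 = v2"
proof -
  have diff: "v1 - v2 \<in> S" using assms(3-7) by (simp add: subspace_diff)
  moreover have "B (v1 - v2) (v1 - v2) = 0"
    using assms(4-7) diff by (simp add: linear_diff[OF lin])
  ultimately have "v1 - v2 = 0" by (rule definite)
  then show ?thesis by simp
qed

lemma bilinear_representation:
  fixes B :: "'a::real_vector \<Rightarrow> 'a \<Rightarrow> real"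
  assumes "finite G"
    and lin: "\<And>w. linear (\<lambda>v. B v w)" and sym: "\<And>v w. B v w = B w v"
    and definite: "\<And>v. v \<in> span G \<Longrightarrow> B v v = 0 \<Longrightarrow> v = 0"
    and "linear f"
  shows "\<exists>!v. v \<in> span G \<and> (\<forall>w\<in>span G. B v w = f w)"
proof -
  obtain v where v: "v \<in> span G" "\<forall>w\<in>span G. B v w = f w"
    using bilinear_representation_exists[where B = B and f = f, OF assms] by blast
  show ?thesis
  proof (rule ex1I[of _ v])
    fix v' assume "v' \<in> span G \<and> (\<forall>w\<in>span G. B v' w = f w)"
    then show "v' = v"
      using bilinear_representation_unique[where B = B and S = "span G", OF lin definite subspace_span]
        v by blast
  qed (use v in blast)
qed

section \<open>Spanning sets of dipoles\<close>

definition dipole :: "nat \<Rightarrow> int^'d::finite \<Rightarrow> int^'d \<Rightarrow> 'm::finite \<Rightarrow> int^'d \<Rightarrow> real^'m" where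
  "dipole M p b i w = (tor_delta M p w - tor_delta M b w) *\<^sub>R axis i 1"

lemma periodic_dipole: "periodic_tor M (dipole M p b i)"
  using periodic_tor_delta[of M p] periodic_tor_delta[of M b]
  unfolding periodic_tor_def dipole_def by simp

lemma dipole_in_XN: "M > 0 \<Longrightarrow> dipole M p b i \<in> XN M"
proof -
  assume "M > 0"
  have "(\<Sum>w\<in>tbox M. dipole M p b i w)
      = ((\<Sum>w\<in>tbox M. tor_delta M p w) - (\<Sum>w\<in>tbox M. tor_delta M b w)) *\<^sub>R axis i 1"
    by (simp add: dipole_def scaleR_diff_left sum_subtractf scaleR_sum_left)
  then show ?thesis
    using \<open>M > 0\<close> by (simp add: XN_def periodic_dipole sum_tbox_tor_delta)
qed

lemma subspace_XN: "subspace (XN M)"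
  by (auto simp: subspace_def XN_def periodic_tor_def sum.distrib simp flip: scaleR_sum_right)

lemma in_span_dipoles:
  fixes \<eta> :: "int^'d::finite \<Rightarrow> real^'m::finite"
  assumes "M > 0" "inj_on (tor_rep M) P" "periodic_tor M \<eta>"
    and vanish: "\<And>w. \<forall>p\<in>P. \<not> cong_tor M w p \<Longrightarrow> \<eta> w = 0"
    and sum_0: "(\<Sum>p\<in>P. \<eta> p) = 0"
  shows "\<eta> \<in> span ((\<lambda>(p, i). dipole M p b i) ` (P \<times> UNIV))"
proof -
  have "(\<Sum>(p, i)\<in>P \<times> UNIV. (\<eta> p $ i) *\<^sub>R dipole M p b i w) = \<eta> w" for w
  proof -
    have coord: "(\<Sum>i\<in>UNIV. v $ i *\<^sub>R axis i 1) = v" for v :: "real^'m"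
      using basis_expansion[of v] by (simp add: scalar_mult_eq_scaleR)
    have "(\<Sum>(p, i)\<in>P \<times> UNIV. (\<eta> p $ i) *\<^sub>R dipole M p b i w)
        = (\<Sum>p\<in>P. \<Sum>i\<in>UNIV. (\<eta> p $ i) *\<^sub>R dipole M p b i w)"
      by (simp add: sum.cartesian_product split_def)
    also have "\<dots> = (\<Sum>p\<in>P. (tor_delta M p w - tor_delta M b w) *\<^sub>R \<eta> p)"
      unfolding dipole_def scaleR_left_commute[of "\<eta> _ $ _"] scaleR_sum_right[symmetric] coord ..
    also have "\<dots> = (\<Sum>p\<in>P. tor_delta M p w *\<^sub>R \<eta> p) - tor_delta M b w *\<^sub>R (\<Sum>p\<in>P. \<eta> p)"
      by (simp add: scaleR_diff_left sum_subtractf scaleR_sum_right)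
    also have "\<dots> = \<eta> w"
      using sum_tor_delta_reps[OF assms(1-3) vanish] sum_0 by simp
    finally show ?thesis .
  qed
  then have "\<eta> = (\<Sum>(p, i)\<in>P \<times> UNIV. (\<eta> p $ i) *\<^sub>R dipole M p b i)"
    by (simp add: fun_eq_iff split_def)
  also have "\<dots> \<in> span ((\<lambda>(p, i). dipole M p b i) ` (P \<times> UNIV))"
  proof (rule span_sum)
    fix k :: "(int^'d) \<times> 'm" assume "k \<in> P \<times> UNIV"
    then show "(case k of (p, i) \<Rightarrow> (\<eta> p $ i) *\<^sub>R dipole M p b i)
        \<in> span ((\<lambda>(p, i). dipole M p b i) ` (P \<times> UNIV))"
    proof (cases k)
      case (Pair p i)
      with \<open>k \<in> P \<times> UNIV\<close> have "dipole M p b i \<in> span ((\<lambda>(p, i). dipole M p b i) ` (P \<times> UNIV))"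
        by (intro span_base) auto
      then show ?thesis by (simp add: Pair span_scale)
    qed
  qed
  finally show ?thesis .
qed

definition XN_gen :: "nat \<Rightarrow> (int^'d::finite \<Rightarrow> real^'m::finite) set" where
  "XN_gen M = (\<lambda>(p, i). dipole M p 0 i) ` (tbox M \<times> UNIV)"

lemma finite_XN_gen: "finite (XN_gen M)"
  by (simp add: XN_gen_def finite_tbox)

lemma XN_eq_span:
  assumes "M > 0"
  shows "(XN M :: (int^'d::finite \<Rightarrow> real^'m::finite) set) = span (XN_gen M)"
proof
  show "span (XN_gen M) \<subseteq> XN M"
    by (rule span_minimal[OF _ subspace_XN]) (auto simp: XN_gen_def dipole_in_XN[OF assms])
  show "XN M \<subseteq> span (XN_gen M)"
  proof
    fix \<eta> assume \<eta>: "\<eta> \<in> XN M"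
    have inj: "inj_on (tor_rep M) (tbox M)"
      by (auto intro: inj_onI simp: tor_rep_tbox)
    have vanish: "\<eta> w = 0" if "\<forall>p\<in>tbox M. \<not> cong_tor M w p" for w
      using that tor_rep_in_tbox[OF assms] cong_tor_tor_rep by blast
    show "\<eta> \<in> span (XN_gen M)"
      unfolding XN_gen_def
      using in_span_dipoles[where P = "tbox M" and \<eta> = \<eta> and b = 0, OF assms inj] \<eta> vanish
      by (simp add: XN_def)
  qed
qed

locale torus_cube =
  fixes M l :: nat
  assumes M_pos: "0 < M" and l_ge_2: "2 \<le> l" and l_le_M: "l \<le> M"
begin

lemma cube_cong_imp_eq:
  assumes "q \<in> cubeQ l" "q' \<in> cubeQ l" "cong_tor M (q + x) (q' + x)"
  shows "q = q'"
proof (subst vec_eq_iff, rule allI)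
  fix j
  have "int M dvd q$j - q'$j" using assms(3) by (simp add: cong_tor_iff_dvd)
  moreover have "\<bar>q$j - q'$j\<bar> < int M"
  proof -
    have "1 \<le> q$j" "q$j \<le> int l - 1" "1 \<le> q'$j" "q'$j \<le> int l - 1"
      using cubeQ_bounds[OF assms(1)] cubeQ_bounds[OF assms(2)] by auto
    then show ?thesis using l_le_M by linarith
  qed
  ultimately show "q$j = q'$j" by (rule eq_if_int_dvd_diff_small)
qed

lemma one_in_cubeQ: "1 \<in> cubeQ l"
  using l_ge_2 by (simp add: cubeQ_def)

definition Vsub_gen :: "int^'d \<Rightarrow> (int^'d \<Rightarrow> real^'m::finite) set" where
  "Vsub_gen x = (\<lambda>(p, i). dipole M p (1 + x) i) ` ((\<lambda>q. q + x) ` cubeQ l \<times> UNIV)"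

lemma finite_Vsub_gen: "finite (Vsub_gen x)"
  by (simp add: Vsub_gen_def finite_cubeQ)

lemma subspace_Vsub: "subspace (Vsub M l x)"
  using subspace_XN[of M] by (auto simp: subspace_def Vsub_def)

lemma Vsub_eq_span: "(Vsub M l x :: (int^'d::finite \<Rightarrow> real^'m::finite) set) = span (Vsub_gen x)"
proof
  show "span (Vsub_gen x) \<subseteq> Vsub M l x"
    by (rule span_minimal[OF _ subspace_Vsub])
      (use one_in_cubeQ in \<open>auto simp: Vsub_gen_def Vsub_def dipole_in_XN[OF M_pos] dipole_def tor_delta_def\<close>)
  show "Vsub M l x \<subseteq> span (Vsub_gen x)"
  proof
    fix \<eta> assume \<eta>: "\<eta> \<in> Vsub M l x"
    let ?P = "(\<lambda>q. q + x) ` cubeQ l"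
    have inj: "inj_on (tor_rep M) ?P"
    proof (rule inj_onI)
      fix p p' assume "p \<in> ?P" "p' \<in> ?P" "tor_rep M p = tor_rep M p'"
      then obtain q q' where "q \<in> cubeQ l" "q' \<in> cubeQ l" "p = q + x" "p' = q' + x"
        "cong_tor M (q + x) (q' + x)"
        by (auto simp: cong_tor_iff_tor_rep_eq)
      then show "p = p'" using cube_cong_imp_eq by blast
    qed
    have per: "periodic_tor M \<eta>" and vanish: "\<And>w. \<forall>p\<in>?P. \<not> cong_tor M w p \<Longrightarrow> \<eta> w = 0"
      using \<eta> by (auto simp: Vsub_def XN_def)
    have "(\<Sum>p\<in>?P. \<eta> p) = (\<Sum>w\<in>tbox M. \<eta> w)"
      using sum_tbox_eq_sum_reps[OF M_pos inj per vanish] by simp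
    also have "\<dots> = 0" using \<eta> by (simp add: Vsub_def XN_def)
    finally have "(\<Sum>p\<in>?P. \<eta> p) = 0" .
    with M_pos inj per vanish show "\<eta> \<in> span (Vsub_gen x)"
      unfolding Vsub_gen_def by (rule in_span_dipoles)
  qed
qed

end

lemma grad_add: "grad (u + v) x = grad u x + grad v x"
  by (simp add: vec_eq_iff grad_def)

lemma grad_scaleR: "grad (c *\<^sub>R u) x = c *\<^sub>R grad u x"
  by (simp add: vec_eq_iff grad_def algebra_simps)

lemma grad_tor_rep:
  assumes "periodic_tor M v"
  shows "grad v (tor_rep M y) = grad v y"
proof -
  have "cong_tor M (tor_rep M y + ej j) (y + ej j)" for j
    by (rule cong_tor_add_right[OF cong_tor_sym[OF cong_tor_tor_rep]])
  then have "v (tor_rep M y + ej j) = v (y + ej j)" for j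
    by (rule periodic_tor_cong[OF assms])
  then show ?thesis by (simp add: grad_def periodic_tor_tor_rep[OF assms])
qed

lemma linear_ip_left: "linear (\<lambda>u. ip M u w)"
  by (rule linearI) (simp_all add: ip_def inner_add_left sum.distrib scaleR_sum_right sum_distrib_left)

lemma ip_commute: "ip M u w = ip M w u"
  by (simp add: ip_def inner_commute)

lemma ip_self_eq_0_imp:
  assumes "M > 0" "periodic_tor M u" "ip M u u = 0"
  shows "u = 0"
proof
  fix y
  have "\<forall>w\<in>tbox M. u w \<bullet> u w = 0"
    using assms(3) by (simp add: ip_def sum_nonneg_eq_0_iff finite_tbox)
  then have "u (tor_rep M y) = 0" using tor_rep_in_tbox[OF assms(1)] by auto
  then show "u y = 0 y" using periodic_tor_tor_rep[OF assms(2)] by simp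
qed

lemma linear_ipA_left: "linear A \<Longrightarrow> linear (\<lambda>u. ipA A M u w)"
  by (rule linearI) (simp_all add: ipA_def grad_add grad_scaleR linear_add linear_scale
      inner_add_left sum.distrib sum_distrib_left)

lemma ipA_commute: "(\<And>F G. A F \<bullet> G = F \<bullet> A G) \<Longrightarrow> ipA A M u w = ipA A M w u"
  by (simp add: ipA_def inner_commute)

lemma adj_spec:
  assumes "M > 0" "linear Op"
  shows "adj M Op \<phi> \<in> XN M \<and> (\<forall>\<psi>\<in>XN M. ip M (adj M Op \<phi>) \<psi> = ip M \<phi> (Op \<psi>))"
proof -
  have "linear (\<lambda>\<psi>. ip M \<phi> (Op \<psi>))"
    using linear_compose[OF assms(2) linear_ip_left[of M \<phi>]] by (simp add: o_def ip_commute)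
  then have "\<exists>!\<eta>. \<eta> \<in> XN M \<and> (\<forall>\<psi>\<in>XN M. ip M \<eta> \<psi> = ip M \<phi> (Op \<psi>))"
    unfolding XN_eq_span[OF assms(1)]
    by (intro bilinear_representation finite_XN_gen linear_ip_left ip_commute)
      (auto simp: XN_eq_span[OF assms(1), symmetric] XN_def intro: ip_self_eq_0_imp[OF assms(1)])
  then show ?thesis unfolding adj_def by (rule theI')
qed

definition separated :: "nat \<Rightarrow> nat \<Rightarrow> (int^'d::finite \<Rightarrow> real^'m::finite) \<Rightarrow> (int^'d \<Rightarrow> real^'m) \<Rightarrow> bool"
  where "separated M r \<phi> \<psi> \<longleftrightarrow>
    (\<forall>a b v. \<phi> a \<noteq> 0 \<longrightarrow> \<psi> b \<noteq> 0 \<longrightarrow> cong_tor M (a - b) v \<longrightarrow> (\<exists>j. int r \<le> \<bar>v$j\<bar>))"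

lemma separated_commute:
  assumes "separated M r \<phi> \<psi>"
  shows "separated M r \<psi> \<phi>"
  unfolding separated_def
proof (intro allI impI)
  fix a b v assume "\<psi> a \<noteq> 0" "\<phi> b \<noteq> 0" "cong_tor M (a - b) v"
  then have "cong_tor M (b - a) (- v)"
    using cong_tor_diff[OF cong_tor_refl[of M 0] \<open>cong_tor M (a - b) v\<close>] by simp
  then obtain j where "int r \<le> \<bar>(- v)$j\<bar>"
    using assms \<open>\<psi> a \<noteq> 0\<close> \<open>\<phi> b \<noteq> 0\<close> unfolding separated_def by blast
  then show "\<exists>j. int r \<le> \<bar>v$j\<bar>" by auto
qed

lemma ip_eq_0_if_separated:
  assumes "1 \<le> r" "separated M r \<phi> \<psi>"
  shows "ip M \<phi> \<psi> = 0"
proof -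
  have "\<phi> a \<bullet> \<psi> a = 0" for a
    using assms(2)[unfolded separated_def, rule_format, of a a 0] assms(1)
    by (cases "\<phi> a = 0"; cases "\<psi> a = 0") auto
  then show ?thesis by (simp add: ip_def)
qed

lemma rho_le_supnorm: "rho M a b \<le> supnorm (a - b + of_nat M * z)"
  unfolding rho_def
proof (rule cInf_lower)
  show "bdd_below {supnorm (a - b + of_nat M * z) |z. True}"
  proof (rule bdd_belowI)
    fix s assume "s \<in> {supnorm (a - b + of_nat M * z) |z. True}"
    then show "0 \<le> s" by (auto simp: supnorm_def intro: Max_ge_iff[THEN iffD2])
  qed
qed blast

lemma supnorm_attained: "\<exists>j. supnorm v = \<bar>v$j\<bar>"
proof -
  have "supnorm v \<in> range (\<lambda>j. \<bar>v$j\<bar>)" unfolding supnorm_def by (rule Max_in) auto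
  then show ?thesis by auto
qed

lemma separated_if_dist_inf_gt:
  fixes \<phi> \<psi> :: "int^'d::finite \<Rightarrow> real^'m::finite"
  assumes "M > 0" "periodic_tor M \<phi>" "periodic_tor M \<psi>"
    and dist: "dist_inf M (suppT M \<phi>) (suppT M \<psi>) > ereal (real r - 1)"
  shows "separated M r \<phi> \<psi>"
  unfolding separated_def
proof (intro allI impI)
  fix a b v assume "\<phi> a \<noteq> 0" "\<psi> b \<noteq> 0" "cong_tor M (a - b) v"
  then have supp: "tor_rep M a \<in> suppT M \<phi>" "tor_rep M b \<in> suppT M \<psi>"
    using assms(1-3) by (simp_all add: suppT_def tor_rep_in_tbox periodic_tor_tor_rep)
  have "ereal (real r - 1) < ereal (real_of_int (rho M (tor_rep M a) (tor_rep M b)))"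
    using dist order.strict_trans2[OF _ Inf_lower] supp unfolding dist_inf_def by blast
  then have r: "int r \<le> rho M (tor_rep M a) (tor_rep M b)" by simp
  have "cong_tor M (tor_rep M a - tor_rep M b) v"
    using cong_tor_diff[OF cong_tor_tor_rep cong_tor_tor_rep] \<open>cong_tor M (a - b) v\<close>
    by (meson cong_tor_sym cong_tor_trans)
  then obtain z where "v = tor_rep M a - tor_rep M b + of_nat M * z" by (rule cong_tor_imp_shift)
  then have "int r \<le> supnorm v" using r rho_le_supnorm order_trans by metis
  then show "\<exists>j. int r \<le> \<bar>v$j\<bar>" using supnorm_attained by metis
qed

section \<open>Locality of the projections\<close>

locale cube_projection = torus_cube +
  fixes A :: "real^'d::finite^'m::finite \<Rightarrow> real^'d^'m"
  assumes linear_A: "linear A"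
    and A_symmetric: "\<And>F G. A F \<bullet> G = F \<bullet> A G"
    and A_pos: "\<And>F. F \<noteq> 0 \<Longrightarrow> 0 < A F \<bullet> F"
begin

lemma ipA_self_eq_0_imp_grad_eq_0:
  assumes "periodic_tor M v" "ipA A M v v = 0"
  shows "grad v y = 0"
proof -
  have nonneg: "0 \<le> A F \<bullet> F" for F
    using A_pos[of F] by (cases "F = 0") (auto simp: linear_0[OF linear_A])
  have "\<forall>w\<in>tbox M. A (grad v w) \<bullet> grad v w = 0"
    using assms(2) nonneg by (simp add: ipA_def sum_nonneg_eq_0_iff finite_tbox)
  then have "A (grad v (tor_rep M y)) \<bullet> grad v (tor_rep M y) = 0"
    using tor_rep_in_tbox[OF M_pos] by auto
  then have "grad v (tor_rep M y) = 0" using A_pos by force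
  then show ?thesis using grad_tor_rep[OF assms(1)] by simp
qed

lemma translation_invariant_if_grad_eq_0:
  assumes "\<And>y. grad v y = 0"
  shows "v (y + int k *s ej j) = v y"
proof (induction k)
  case (Suc k)
  have step: "v (z + ej j) = v z" for z
    using assms[of z] by (simp add: grad_def vec_eq_iff)
  have "v (y + int (Suc k) *s ej j) = v ((y + int k *s ej j) + ej j)"
    by (rule arg_cong[where f = v]) (simp add: vec_eq_iff ej_def)
  also have "\<dots> = v y" using step Suc.IH by simp
  finally show ?case .
qed (simp add: vec_eq_iff)

lemma Vsub_definite:
  assumes "v \<in> Vsub M l x" "ipA A M v v = 0"
  shows "v = 0"
proof (rule ccontr)
  have per: "periodic_tor M v"
    and vanish: "\<And>y. \<not> (\<exists>q\<in>cubeQ l. cong_tor M y (q + x)) \<Longrightarrow> v y = 0"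
    using assms(1) by (auto simp: Vsub_def XN_def)
  have walk: "v (y + int k *s ej j) = v y" for y j k
    using ipA_self_eq_0_imp_grad_eq_0[OF per assms(2)] by (rule translation_invariant_if_grad_eq_0)
  \<comment> \<open>Walk from a point \<open>y \<equiv> q + x\<close> of the support until its \<open>j\<close>-th coordinate is \<open>l\<close>;
    as \<open>l \<le> M\<close>, that point lies outside \<open>Q + x\<close> on the torus.\<close>
  assume "v \<noteq> 0"
  then obtain y where "v y \<noteq> 0" by (auto simp: fun_eq_iff)
  then obtain q where q: "q \<in> cubeQ l" "cong_tor M y (q + x)" using vanish by blast
  obtain j :: 'd where True by blast
  define k where "k = nat (int l - q$j)"
  have k: "int k = int l - q$j" using cubeQ_bounds[OF q(1), of j] by (simp add: k_def)
  have "v (y + int k *s ej j) \<noteq> 0" using walk \<open>v y \<noteq> 0\<close> by simp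
  then obtain q' where q': "q' \<in> cubeQ l" "cong_tor M (y + int k *s ej j) (q' + x)"
    using vanish by blast
  have "int M dvd y$j - (q$j + x$j)" using q(2) by (simp add: cong_tor_iff_dvd)
  moreover have "int M dvd y$j + int k - (q'$j + x$j)"
    using q'(2)[unfolded cong_tor_iff_dvd, rule_format, of j] by (simp add: ej_def)
  ultimately have "int M dvd (y$j + int k - (q'$j + x$j)) - (y$j - (q$j + x$j))"
    by (rule dvd_diff[rotated])
  then have "int M dvd int l - q'$j" using k by (simp add: algebra_simps)
  moreover have "\<bar>int l - q'$j\<bar> < int M"
  proof -
    show ?thesis using cubeQ_bounds[OF q'(1), of j] l_le_M by (simp add: abs_less_iff)
  qed
  ultimately have "int l = q'$j" by (rule eq_if_int_dvd_diff_small)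
  then show False using cubeQ_bounds[OF q'(1), of j] by simp
qed

lemma Proj_spec:
  "Proj A M l x \<phi> \<in> Vsub M l x \<and> (\<forall>\<eta>\<in>Vsub M l x. ipA A M (Proj A M l x \<phi>) \<eta> = ipA A M \<phi> \<eta>)"
proof -
  have "linear (ipA A M \<phi>)"
    using linear_ipA_left[OF linear_A] ipA_commute[OF A_symmetric] by (rule linear_right_if_symmetric)
  then have ex1: "\<exists>!P. P \<in> Vsub M l x \<and> (\<forall>\<eta>\<in>Vsub M l x. ipA A M P \<eta> = ipA A M \<phi> \<eta>)"
    unfolding Vsub_eq_span
    by (intro bilinear_representation finite_Vsub_gen linear_ipA_left[OF linear_A] ipA_commute
        A_symmetric) (auto simp flip: Vsub_eq_span intro: Vsub_definite)
  have "ipA A M (\<lambda>y. \<phi> y - P y) \<eta> = 0 \<longleftrightarrow> ipA A M P \<eta> = ipA A M \<phi> \<eta>" for P \<eta>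
    using linear_diff[OF linear_ipA_left[OF linear_A, of M \<eta>], of \<phi> P] by (auto simp: fun_diff_def)
  then show ?thesis
    unfolding Proj_def by (simp only:) (rule theI'[OF ex1])
qed

lemma Proj_eqI:
  assumes "P \<in> Vsub M l x" "\<And>\<eta>. \<eta> \<in> Vsub M l x \<Longrightarrow> ipA A M P \<eta> = ipA A M \<phi> \<eta>"
  shows "Proj A M l x \<phi> = P"
proof -
  have "Proj A M l x \<phi> - P \<in> Vsub M l x"
    using Proj_spec assms(1) subspace_Vsub by (blast intro: subspace_diff)
  moreover have "ipA A M (Proj A M l x \<phi> - P) (Proj A M l x \<phi> - P) = 0"
    using Proj_spec assms calculation by (simp add: linear_diff[OF linear_ipA_left[OF linear_A]])
  ultimately show ?thesis using Vsub_definite by force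
qed

lemma linear_Proj: "linear (Proj A M l x)"
proof (rule linearI)
  have lin: "linear (\<lambda>u. ipA A M u \<eta>)" for \<eta> by (rule linear_ipA_left[OF linear_A])
  show "Proj A M l x (u + v) = Proj A M l x u + Proj A M l x v" for u v
    using Proj_spec[of x u] Proj_spec[of x v] subspace_Vsub
    by (intro Proj_eqI) (auto intro: subspace_add simp: linear_add[OF lin])
  show "Proj A M l x (c *\<^sub>R u) = c *\<^sub>R Proj A M l x u" for c u
    using Proj_spec[of x u] subspace_Vsub
    by (intro Proj_eqI) (auto intro: subspace_scale simp: linear_scale[OF lin])
qed

lemma Top_eq: "Top A M l \<phi> = (1 / real l ^ CARD('d)) *\<^sub>R (\<Sum>x\<in>tbox M. Proj A M l x \<phi>)"
  by (simp add: Top_def fun_eq_iff)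

lemma linear_Top: "linear (Top A M l)"
  unfolding Top_eq[abs_def]
  by (intro linear_compose_scale_right linear_compose_sum ballI linear_Proj)

lemma linear_Rop: "linear (Rop A M l)"
proof -
  have "Rop A M l = (\<lambda>\<phi>. \<phi> - Top A M l \<phi>)" by (simp add: Rop_def fun_eq_iff)
  then show ?thesis using linear_compose_sub[OF linear_ident linear_Top] by simp
qed

lemma Vsub_grad_support:
  assumes "\<eta> \<in> Vsub M l x" "grad \<eta> y \<noteq> 0"
  obtains c where "c \<in> int_box 0 (int l - 1)" "cong_tor M y (c + x)"
proof -
  have vanish: "\<And>w. \<eta> w \<noteq> 0 \<Longrightarrow> \<exists>q\<in>cubeQ l. cong_tor M w (q + x)"
    using assms(1) by (auto simp: Vsub_def)
  have "\<eta> y \<noteq> 0 \<or> (\<exists>j. \<eta> (y + ej j) \<noteq> 0)"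
  proof (rule ccontr)
    assume "\<not> ?thesis"
    then have "grad \<eta> y = 0" by (simp add: grad_def vec_eq_iff)
    with assms(2) show False by simp
  qed
  then consider "\<eta> y \<noteq> 0" | j where "\<eta> (y + ej j) \<noteq> 0" by blast
  then show ?thesis
  proof cases
    case 1
    then obtain q where q: "q \<in> cubeQ l" "cong_tor M y (q + x)" using vanish by blast
    have "0 \<le> q$i \<and> q$i \<le> int l - 1" for i
      using cubeQ_bounds[OF q(1), of i] by simp
    then have "q \<in> int_box 0 (int l - 1)" by simp
    with q(2) show ?thesis by (intro that)
  next
    case 2
    then obtain q where q: "q \<in> cubeQ l" "cong_tor M (y + ej j) (q + x)" using vanish by blast
    have "cong_tor M (y + ej j - ej j) (q + x - ej j)"
      using cong_tor_diff[OF q(2) cong_tor_refl] .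
    then have "cong_tor M y ((q - ej j) + x)" by (simp add: algebra_simps)
    moreover have "q - ej j \<in> int_box 0 (int l - 1)" unfolding mem_int_box
    proof
      fix i show "0 \<le> (q - ej j)$i \<and> (q - ej j)$i \<le> int l - 1"
        using cubeQ_bounds[OF q(1), of i] by (cases "i = j") (simp_all add: ej_def)
    qed
    ultimately show ?thesis by (intro that)
  qed
qed

lemma ipA_eq_0_if_vanishes_near_cube:
  assumes vanish: "\<And>c y. c \<in> int_box 0 (int l) \<Longrightarrow> cong_tor M y (c + x) \<Longrightarrow> \<phi> y = 0"
    and "\<eta> \<in> Vsub M l x"
  shows "ipA A M \<phi> \<eta> = 0"
proof -
  have "grad \<phi> y = 0" if ne: "grad \<eta> y \<noteq> 0" for y
  proof -
    obtain c where c: "c \<in> int_box 0 (int l - 1)" "cong_tor M y (c + x)"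
      using Vsub_grad_support[OF assms(2) ne] by blast
    have "c \<in> int_box 0 (int l)" unfolding mem_int_box
    proof
      fix i show "0 \<le> c$i \<and> c$i \<le> int l" using int_box_component[OF c(1), of i] by simp
    qed
    then have "\<phi> y = 0" using c(2) by (rule vanish)
    moreover have "\<phi> (y + ej j) = 0" for j
    proof (rule vanish[of "c + ej j"])
      show "c + ej j \<in> int_box 0 (int l)" unfolding mem_int_box
      proof
        fix i show "0 \<le> (c + ej j)$i \<and> (c + ej j)$i \<le> int l"
          using int_box_component[OF c(1), of i] by (cases "i = j") (simp_all add: ej_def)
      qed
      show "cong_tor M (y + ej j) (c + ej j + x)"
        using cong_tor_add_right[OF c(2), of "ej j"] by (simp add: algebra_simps)
    qed
    ultimately show ?thesis by (simp add: grad_def vec_eq_iff)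
  qed
  then have "A (grad \<phi> y) \<bullet> grad \<eta> y = 0" for y
    by (cases "grad \<eta> y = 0") (auto simp: linear_0[OF linear_A])
  then show ?thesis by (simp add: ipA_def)
qed

lemma Proj_eq_0_if_vanishes_near_cube:
  assumes "\<And>c y. c \<in> int_box 0 (int l) \<Longrightarrow> cong_tor M y (c + x) \<Longrightarrow> \<phi> y = 0"
  shows "Proj A M l x \<phi> = 0"
proof (rule Proj_eqI)
  show "0 \<in> Vsub M l x" by (rule subspace_0[OF subspace_Vsub])
  show "ipA A M 0 \<eta> = ipA A M \<phi> \<eta>" if "\<eta> \<in> Vsub M l x" for \<eta>
    using ipA_eq_0_if_vanishes_near_cube[OF assms that] linear_0[OF linear_ipA_left[OF linear_A]]
    by simp
qed

lemma ip_Proj_eq_0_if_separated: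
  assumes sep: "separated M l \<phi> \<psi>"
  shows "ip M (Proj A M l x \<phi>) \<psi> = 0"
proof (cases "\<exists>b q. q \<in> cubeQ l \<and> cong_tor M b (q + x) \<and> \<psi> b \<noteq> 0")
  case False
  have "Proj A M l x \<phi> y = 0 \<or> \<psi> y = 0" for y
  proof (cases "\<exists>q\<in>cubeQ l. cong_tor M y (q + x)")
    case True
    then show ?thesis using False by blast
  next
    case outside: False
    then show ?thesis using Proj_spec[of x \<phi>] by (simp add: Vsub_def)
  qed
  then have "Proj A M l x \<phi> y \<bullet> \<psi> y = 0" for y by (metis inner_zero_left inner_zero_right)
  then show ?thesis by (simp add: ip_def)
next
  case True
  then obtain b q where bq: "q \<in> cubeQ l" "cong_tor M b (q + x)" "\<psi> b \<noteq> 0" by blast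
  have "\<phi> a = 0" if c: "c \<in> int_box 0 (int l)" and a: "cong_tor M a (c + x)" for c a
  proof (rule ccontr)
    assume "\<phi> a \<noteq> 0"
    moreover have "cong_tor M (a - b) (c - q)"
      using cong_tor_diff[OF a bq(2)] by simp
    ultimately obtain j where "int l \<le> \<bar>(c - q)$j\<bar>"
      using sep bq(3) unfolding separated_def by blast
    moreover have "\<bar>(c - q)$j\<bar> \<le> int l - 1"
      using int_box_component[OF c, of j] cubeQ_bounds[OF bq(1), of j] by (simp add: abs_le_iff abs_less_iff)
    ultimately show False by simp
  qed
  then have "Proj A M l x \<phi> = 0" by (rule Proj_eq_0_if_vanishes_near_cube)
  then show ?thesis by (simp add: ip_def)
qed

lemma ip_Top_eq_0_if_separated:
  assumes "separated M l \<phi> \<psi>"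
  shows "ip M (Top A M l \<phi>) \<psi> = 0"
  using ip_Proj_eq_0_if_separated[OF assms]
  by (simp add: Top_eq linear_scale[OF linear_ip_left] linear_sum[OF linear_ip_left])

lemma ip_Rop_eq_0_if_separated:
  assumes "separated M l \<phi> \<psi>"
  shows "ip M (Rop A M l \<phi>) \<psi> = 0"
proof -
  have "Rop A M l \<phi> = \<phi> - Top A M l \<phi>" by (simp add: Rop_def fun_eq_iff)
  then show ?thesis
    using ip_Top_eq_0_if_separated[OF assms] ip_eq_0_if_separated[OF _ assms] l_ge_2
    by (simp add: linear_diff[OF linear_ip_left])
qed

end

lemma cube_projection_if_coercive:
  fixes A :: "real^'d::finite^'m::finite \<Rightarrow> real^'d^'m"
  assumes "0 < M" "2 \<le> l" "l \<le> M" "linear A" "\<forall>F G. A F \<bullet> G = F \<bullet> A G"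
    and "c0 > 0" "\<forall>F. A F \<bullet> F \<ge> c0 * (norm F)\<^sup>2"
  shows "cube_projection M l A"
proof (intro cube_projection.intro torus_cube.intro cube_projection_axioms.intro)
  show "0 < A F \<bullet> F" if "F \<noteq> 0" for F
  proof -
    have "0 < c0 * (norm F)\<^sup>2" using assms(6) that by simp
    also have "\<dots> \<le> A F \<bullet> F" using assms(7) by blast
    finally show ?thesis .
  qed
qed (use assms in simp_all)

theorem lemma3p7:
  fixes A :: "real^'d::finite^'m::finite \<Rightarrow> real^'d^'m"
    and L N l :: nat and c0 :: real
    and \<phi> \<psi> :: "int^'d \<Rightarrow> real^'m"
  assumes "CARD('d) \<ge> 2" and "L \<ge> 3" and "odd L" and "N \<ge> 1"
    and "linear A"
    and "\<forall>F G. A F \<bullet> G = F \<bullet> A G"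
    and "c0 > 0" and "\<forall>F. A F \<bullet> F \<ge> c0 * (norm F)\<^sup>2"
    and "l \<ge> 3" and "l - 1 < L ^ N"
    and "\<phi> \<in> XN (L ^ N)" and "\<psi> \<in> XN (L ^ N)"
    and "dist_inf (L ^ N) (suppT (L ^ N) \<phi>) (suppT (L ^ N) \<psi>) > ereal (real l - 1)"
  shows "ip (L ^ N) (Top A (L ^ N) l \<phi>) \<psi> = 0
       \<and> ip (L ^ N) (adj (L ^ N) (Top A (L ^ N) l) \<phi>) \<psi> = 0
       \<and> ip (L ^ N) (Rop A (L ^ N) l \<phi>) \<psi> = 0
       \<and> ip (L ^ N) (adj (L ^ N) (Rop A (L ^ N) l) \<phi>) \<psi> = 0"
proof -
  define M where "M = L ^ N"
  have "cube_projection M l A"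
    using assms(2,5-10) by (intro cube_projection_if_coercive) (simp_all add: M_def)
  then interpret cube_projection M l A .
  have sep: "separated M l \<phi> \<psi>"
    using assms(11-13) M_pos by (intro separated_if_dist_inf_gt) (simp_all add: XN_def M_def)
  have adj: "ip M (adj M Op \<phi>) \<psi> = ip M (Op \<psi>) \<phi>" if "linear Op" for Op
    using adj_spec[OF M_pos that] assms(12) by (simp add: M_def ip_commute)
  show ?thesis
    using ip_Top_eq_0_if_separated[OF sep] ip_Rop_eq_0_if_separated[OF sep]
      ip_Top_eq_0_if_separated[OF separated_commute[OF sep]]
      ip_Rop_eq_0_if_separated[OF separated_commute[OF sep]]
      adj[OF linear_Top] adj[OF linear_Rop]
    by (simp add: M_def)
qed

end
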